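(* Let $\mathbb K$ be algebraically closed of characteristic $0$, $f(y)=\prod_{i=1}^{\gamma}(y-\alpha_i)^{\beta_i}$ with pairwise distinct $\alpha_i\in\mathbb K^*$ and $\beta_i\ge1$, and $U_f=\operatorname{Spec}\mathbb K[x_1,x_2,y^{\pm1}]/(x_1x_2-f(y))$. Then the closed irreducible curves in $U_f$ isomorphic to $\mathbb A^1$ are exactly the $2\gamma$ curves $\{x_2=0,\ y=\alpha_i\}$ and $\{x_1=0,\ y=\alpha_i\}$, $i=1,\dots,\gamma$. *)

theory Defs
  imports "HOL-Computational_Algebra.Polynomial"
begin

text \<open>Polynomials in three variables x1, x2, y are represented as nested univariate
  polynomials 'a poly poly poly (innermost variable x1, then x2, outermost y).\<close>

definition eval3 :: "'a::comm_ring_1 poly poly poly \<Rightarrow> 'a \<times> 'a \<times> 'a \<Rightarrow> 'a" where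
  "eval3 P u = (case u of (x1, x2, y) \<Rightarrow>
      poly (map_poly (\<lambda>Q. poly (map_poly (\<lambda>R. poly R x1) Q) x2) P) y)"

definition U_f :: "'a::field poly \<Rightarrow> ('a \<times> 'a \<times> 'a) set" where
  "U_f f = {(x1, x2, y). y \<noteq> 0 \<and> x1 * x2 = poly f y}"

text \<open>Zariski closed subsets of U (U a subset of K^3 with y invertible):
  common zero loci in U of families of polynomials.  (Laurent polynomials in y
  give the same closed sets, since y is a unit on U.)\<close>
definition zariski_closed_in :: "('a::field \<times> 'a \<times> 'a) set \<Rightarrow> ('a \<times> 'a \<times> 'a) set \<Rightarrow> bool" where
  "zariski_closed_in U C \<longleftrightarrow> C \<subseteq> U \<and> (\<exists>S. C = {u \<in> U. \<forall>P\<in>S. eval3 P u = 0})"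

text \<open>Regular functions on U: restrictions of elements of K[x1,x2,y^{+-1}],
  i.e. of the form P(x1,x2,y) / y^k.\<close>
definition regular_on :: "('a::field \<times> 'a \<times> 'a) set \<Rightarrow> ('a \<times> 'a \<times> 'a \<Rightarrow> 'a) \<Rightarrow> bool" where
  "regular_on U g \<longleftrightarrow> (\<exists>P k. \<forall>u\<in>U. g u = eval3 P u / (snd (snd u)) ^ k)"

definition morphism_A1_to :: "('a::field \<times> 'a \<times> 'a) set \<Rightarrow> ('a \<Rightarrow> 'a \<times> 'a \<times> 'a) \<Rightarrow> bool" where
  "morphism_A1_to U \<phi> \<longleftrightarrow>
     (\<exists>p1 p2 p3. \<phi> = (\<lambda>t. (poly p1 t, poly p2 t, poly p3 t))) \<and> (\<forall>t. \<phi> t \<in> U)"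

text \<open>A closed subvariety C of the affine variety U (reduced structure) is isomorphic to A^1:
  there is a morphism A^1 \<rightarrow> U with image C, and an inverse morphism C \<rightarrow> A^1, i.e. a regular
  function on C, which (C being closed in the affine U) is the restriction of a regular function on U.\<close>
definition iso_to_A1 :: "('a::field \<times> 'a \<times> 'a) set \<Rightarrow> ('a \<times> 'a \<times> 'a) set \<Rightarrow> bool" where
  "iso_to_A1 U C \<longleftrightarrow>
     (\<exists>\<phi> \<psi>. morphism_A1_to U \<phi> \<and> range \<phi> = C \<and> regular_on U \<psi> \<and> (\<forall>t. \<psi> (\<phi> t) = t))"

end

theory Submission
  imports Defs
begin

text \<open>A polynomial curve t \<mapsto> (p1 t, p2 t, p3 t) in U_f has p3 without roots, so over an
  algebraically closed field p3 is a constant c \<noteq> 0.  Then p1 p2 = f(c) is constant: if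
  f(c) \<noteq> 0 both factors are constant and the curve is a point, which has no left inverse;
  otherwise one factor vanishes and the other, being nonconstant, is surjective, so the curve is
  a whole coordinate line {x2 = 0, y = c} or {x1 = 0, y = c}.  Conversely, for c \<noteq> 0 these lines
  lie in U_f exactly when f(c) = 0, are cut out by two linear equations, and a coordinate
  function inverts their parametrisation.\<close>

lemma poly_eq_coeff_0_if_degree_0: "degree p = 0 \<Longrightarrow> poly p x = coeff p 0"
  by (cases p) (auto split: if_splits)

lemma alg_closed_degree_eq_0_if_no_roots:
  fixes p :: "'a::alg_closed_field poly"
  assumes "\<And>t. poly p t \<noteq> 0"
  shows "degree p = 0"
  using alg_closed_imp_poly_has_root[of p] assms by auto

lemma alg_closed_surj_poly:
  fixes p :: "'a::alg_closed_field poly"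
  assumes "degree p > 0"
  shows "surj (poly p)"
proof -
  have "\<exists>t. poly p t = x" for x
  proof -
    have "degree (p + [:-x:]) > 0"
      using assms by (simp add: degree_add_eq_left)
    then obtain t where "poly (p + [:-x:]) t = 0"
      using alg_closed_imp_poly_has_root by blast
    then show ?thesis by auto
  qed
  then show ?thesis by (metis surjI)
qed

definition x1_axis_at :: "'a::zero \<Rightarrow> ('a \<times> 'a \<times> 'a) set" where
  "x1_axis_at c = {(x1, x2, y). x2 = 0 \<and> y = c}"

definition x2_axis_at :: "'a::zero \<Rightarrow> ('a \<times> 'a \<times> 'a) set" where
  "x2_axis_at c = {(x1, x2, y). x1 = 0 \<and> y = c}"

lemma x1_axis_at_eq_range: "x1_axis_at c = range (\<lambda>t. (t, 0, c))"
  by (auto simp: x1_axis_at_def)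

lemma x2_axis_at_eq_range: "x2_axis_at c = range (\<lambda>t. (0, t, c))"
  by (auto simp: x2_axis_at_def)

lemma polynomial_curve_in_U_f_is_axis:
  fixes p1 p2 p3 :: "'a::{alg_closed_field, field_char_0} poly"
  defines "\<phi> \<equiv> \<lambda>t. (poly p1 t, poly p2 t, poly p3 t)"
  assumes in_U: "\<And>t. \<phi> t \<in> U_f f"
    and nonconstant: "\<phi> s \<noteq> \<phi> s'"
  shows "\<exists>c. c \<noteq> 0 \<and> poly f c = 0 \<and> (range \<phi> = x1_axis_at c \<or> range \<phi> = x2_axis_at c)"
proof -
  have p3_nonzero: "poly p3 t \<noteq> 0" and on_U: "poly (p1 * p2) t = poly f (poly p3 t)" for t
    using in_U[of t] by (auto simp: \<phi>_def U_f_def)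
  define c where "c = coeff p3 0"
  have p3_const: "poly p3 t = c" for t
    unfolding c_def
    by (rule poly_eq_coeff_0_if_degree_0, rule alg_closed_degree_eq_0_if_no_roots) (fact p3_nonzero)
  have c_nonzero: "c \<noteq> 0"
    using p3_nonzero p3_const by metis
  have p1p2: "poly (p1 * p2) t = poly f c" for t
    using on_U p3_const by simp
  have nonconstant_factor: "degree p1 > 0 \<or> degree p2 > 0"
  proof (rule ccontr)
    assume "\<not> ?thesis"
    then have "\<phi> s = \<phi> s'"
      by (simp add: \<phi>_def p3_const poly_eq_coeff_0_if_degree_0)
    with nonconstant show False ..
  qed
  have root: "poly f c = 0"
  proof (rule ccontr)
    assume "poly f c \<noteq> 0"
    then have "poly p1 t \<noteq> 0" "poly p2 t \<noteq> 0" for t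
      using p1p2[of t] by auto
    then have "degree p1 = 0" "degree p2 = 0"
      by (simp_all add: alg_closed_degree_eq_0_if_no_roots)
    with nonconstant_factor show False by simp
  qed
  have "p1 * p2 = 0"
    using p1p2 root poly_all_0_iff_0 by metis
  then consider "p1 = 0" "degree p2 > 0" | "p2 = 0" "degree p1 > 0"
    using nonconstant_factor by fastforce
  then have "range \<phi> = x1_axis_at c \<or> range \<phi> = x2_axis_at c"
  proof cases
    case 1
    have "range \<phi> = (\<lambda>x. (0, x, c)) ` range (poly p2)"
      by (auto simp: \<phi>_def \<open>p1 = 0\<close> p3_const)
    then show ?thesis
      using alg_closed_surj_poly[OF \<open>degree p2 > 0\<close>] by (simp add: x2_axis_at_eq_range)
  next
    case 2
    have "range \<phi> = (\<lambda>x. (x, 0, c)) ` range (poly p1)"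
      by (auto simp: \<phi>_def \<open>p2 = 0\<close> p3_const)
    then show ?thesis
      using alg_closed_surj_poly[OF \<open>degree p1 > 0\<close>] by (simp add: x1_axis_at_eq_range)
  qed
  with c_nonzero root show ?thesis by blast
qed

lemma iso_to_A1_U_f_imp_axis:
  fixes f :: "'a::{alg_closed_field, field_char_0} poly"
  assumes "iso_to_A1 (U_f f) C"
  shows "\<exists>c. c \<noteq> 0 \<and> poly f c = 0 \<and> (C = x1_axis_at c \<or> C = x2_axis_at c)"
proof -
  obtain \<phi> \<psi> where "morphism_A1_to (U_f f) \<phi>" and "range \<phi> = C"
    and left_inverse: "\<And>t. \<psi> (\<phi> t) = t"
    using assms by (auto simp: iso_to_A1_def)
  then obtain p1 p2 p3 where \<phi>: "\<phi> = (\<lambda>t. (poly p1 t, poly p2 t, poly p3 t))"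
    and in_U: "\<And>t. \<phi> t \<in> U_f f"
    by (auto simp: morphism_A1_to_def)
  have "\<phi> 0 \<noteq> \<phi> 1"
    using left_inverse[of 0] left_inverse[of 1] by force
  with \<open>range \<phi> = C\<close> show ?thesis
    using polynomial_curve_in_U_f_is_axis[of p1 p2 p3] in_U unfolding \<phi> by blast
qed

lemma eval3_x1 [simp]: "eval3 [:[:[:0, 1:]:]:] (x1, x2, y) = x1"
  and eval3_x2 [simp]: "eval3 [:[:0, 1:]:] (x1, x2, y) = x2"
  and eval3_y_minus_const [simp]: "eval3 [:[:[:- c:]:], 1:] (x1, x2, y) = y - c"
  by (simp_all add: eval3_def map_poly_pCons)

lemma x1_axis_at_subset_U_f: "c \<noteq> 0 \<Longrightarrow> poly f c = 0 \<Longrightarrow> x1_axis_at c \<subseteq> U_f f"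
  by (auto simp: x1_axis_at_def U_f_def)

lemma x2_axis_at_subset_U_f: "c \<noteq> 0 \<Longrightarrow> poly f c = 0 \<Longrightarrow> x2_axis_at c \<subseteq> U_f f"
  by (auto simp: x2_axis_at_def U_f_def)

lemma zariski_closed_in_x1_axis_at:
  assumes "c \<noteq> 0" "poly f c = 0"
  shows "zariski_closed_in (U_f f) (x1_axis_at c)"
  unfolding zariski_closed_in_def
proof (intro conjI exI)
  show "x1_axis_at c \<subseteq> U_f f"
    using assms by (rule x1_axis_at_subset_U_f)
  show "x1_axis_at c = {u \<in> U_f f. \<forall>P\<in>{[:[:0, 1:]:], [:[:[:- c:]:], 1:]}. eval3 P u = 0}"
    using assms by (auto simp: x1_axis_at_def U_f_def)
qed

lemma zariski_closed_in_x2_axis_at: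
  assumes "c \<noteq> 0" "poly f c = 0"
  shows "zariski_closed_in (U_f f) (x2_axis_at c)"
  unfolding zariski_closed_in_def
proof (intro conjI exI)
  show "x2_axis_at c \<subseteq> U_f f"
    using assms by (rule x2_axis_at_subset_U_f)
  show "x2_axis_at c = {u \<in> U_f f. \<forall>P\<in>{[:[:[:0, 1:]:]:], [:[:[:- c:]:], 1:]}. eval3 P u = 0}"
    using assms by (auto simp: x2_axis_at_def U_f_def)
qed

lemma iso_to_A1_x1_axis_at:
  assumes "c \<noteq> 0" "poly f c = 0"
  shows "iso_to_A1 (U_f f) (x1_axis_at c)"
proof -
  have "morphism_A1_to (U_f f) (\<lambda>t. (t, 0, c))"
    unfolding morphism_A1_to_def
  proof
    show "\<exists>p1 p2 p3. (\<lambda>t. (t, 0, c)) = (\<lambda>t. (poly p1 t, poly p2 t, poly p3 t))"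
      by (intro exI[of _ "[:0, 1:]"] exI[of _ 0] exI[of _ "[:c:]"]) simp
    show "\<forall>t. (t, 0, c) \<in> U_f f"
      using x1_axis_at_subset_U_f[OF assms] by (auto simp: x1_axis_at_def)
  qed
  moreover have "regular_on (U_f f) fst"
    unfolding regular_on_def by (intro exI[of _ "[:[:[:0, 1:]:]:]"] exI[of _ 0]) auto
  ultimately show ?thesis
    unfolding iso_to_A1_def x1_axis_at_eq_range by fastforce
qed

lemma iso_to_A1_x2_axis_at:
  assumes "c \<noteq> 0" "poly f c = 0"
  shows "iso_to_A1 (U_f f) (x2_axis_at c)"
proof -
  have "morphism_A1_to (U_f f) (\<lambda>t. (0, t, c))"
    unfolding morphism_A1_to_def
  proof
    show "\<exists>p1 p2 p3. (\<lambda>t. (0, t, c)) = (\<lambda>t. (poly p1 t, poly p2 t, poly p3 t))"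
      by (intro exI[of _ 0] exI[of _ "[:0, 1:]"] exI[of _ "[:c:]"]) simp
    show "\<forall>t. (0, t, c) \<in> U_f f"
      using x2_axis_at_subset_U_f[OF assms] by (auto simp: x2_axis_at_def)
  qed
  moreover have "regular_on (U_f f) (fst \<circ> snd)"
    unfolding regular_on_def by (intro exI[of _ "[:[:0, 1:]:]"] exI[of _ 0]) auto
  ultimately show ?thesis
    unfolding iso_to_A1_def x2_axis_at_eq_range by fastforce
qed

lemma closed_iso_to_A1_in_U_f_eq_axes:
  fixes f :: "'a::{alg_closed_field, field_char_0} poly"
  defines "R \<equiv> {c. c \<noteq> 0 \<and> poly f c = 0}"
  shows "{C. zariski_closed_in (U_f f) C \<and> iso_to_A1 (U_f f) C} = x1_axis_at ` R \<union> x2_axis_at ` R"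
proof (intro equalityI subsetI)
  fix C assume "C \<in> {C. zariski_closed_in (U_f f) C \<and> iso_to_A1 (U_f f) C}"
  then obtain c where "c \<in> R" "C = x1_axis_at c \<or> C = x2_axis_at c"
    using iso_to_A1_U_f_imp_axis[of f C] unfolding R_def by auto
  then show "C \<in> x1_axis_at ` R \<union> x2_axis_at ` R"
    by blast
next
  fix C assume "C \<in> x1_axis_at ` R \<union> x2_axis_at ` R"
  then obtain c where "c \<noteq> 0" "poly f c = 0" "C = x1_axis_at c \<or> C = x2_axis_at c"
    unfolding R_def by blast
  then show "C \<in> {C. zariski_closed_in (U_f f) C \<and> iso_to_A1 (U_f f) C}"
    using zariski_closed_in_x1_axis_at[of c f] zariski_closed_in_x2_axis_at[of c f]
      iso_to_A1_x1_axis_at[of c f] iso_to_A1_x2_axis_at[of c f] by auto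
qed

lemma card_axes:
  fixes A :: "'a::zero_neq_one set"
  assumes "finite A"
  shows "card (x1_axis_at ` A \<union> x2_axis_at ` A) = 2 * card A"
proof -
  have "(1, 0, c) \<in> x1_axis_at c" "(1, 0, c) \<notin> x2_axis_at c'" for c c' :: 'a
    by (simp_all add: x1_axis_at_def x2_axis_at_def)
  then have "x1_axis_at ` A \<inter> x2_axis_at ` A = {}"
    by blast
  moreover have "(0, 0, c) \<in> x1_axis_at c' \<longleftrightarrow> c = c'" "(0, 0, c) \<in> x2_axis_at c' \<longleftrightarrow> c = c'"
    for c c' :: 'a
    by (auto simp: x1_axis_at_def x2_axis_at_def)
  then have "inj (x1_axis_at :: 'a \<Rightarrow> _)" "inj (x2_axis_at :: 'a \<Rightarrow> _)"
    by (metis injI)+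
  ultimately show ?thesis
    using assms by (simp add: card_Un_disjoint card_image inj_on_subset)
qed

lemma poly_prod_linear_powers_eq_0_iff:
  fixes \<alpha> :: "nat \<Rightarrow> 'a::field"
  assumes "\<And>i. i < \<gamma> \<Longrightarrow> \<beta> i \<ge> 1"
  shows "poly (\<Prod>i<\<gamma>. [:- \<alpha> i, 1:] ^ \<beta> i) c = 0 \<longleftrightarrow> c \<in> \<alpha> ` {..<\<gamma>}"
  using assms by (auto simp: poly_prod) (metis Suc_le_eq lessThan_iff)

theorem lemma5p4:
  fixes \<alpha> :: "nat \<Rightarrow> 'a::{alg_closed_field, field_char_0}"
    and \<beta> :: "nat \<Rightarrow> nat" and \<gamma> :: nat
  assumes "inj_on \<alpha> {..<\<gamma>}"
    and "\<And>i. i < \<gamma> \<Longrightarrow> \<alpha> i \<noteq> 0"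
    and "\<And>i. i < \<gamma> \<Longrightarrow> \<beta> i \<ge> 1"
  defines "f \<equiv> (\<Prod>i<\<gamma>. [:- \<alpha> i, 1:] ^ \<beta> i)"
  shows "{C. zariski_closed_in (U_f f) C \<and> iso_to_A1 (U_f f) C}
           = (\<Union>i<\<gamma>. {{(x1, x2, y). x2 = 0 \<and> y = \<alpha> i}, {(x1, x2, y). x1 = 0 \<and> y = \<alpha> i}})
       \<and> card {C. zariski_closed_in (U_f f) C \<and> iso_to_A1 (U_f f) C} = 2 * \<gamma>"
proof -
  have "poly f c = 0 \<longleftrightarrow> c \<in> \<alpha> ` {..<\<gamma>}" for c
    unfolding f_def using assms(3) by (rule poly_prod_linear_powers_eq_0_iff)
  with assms(2) have "{c. c \<noteq> 0 \<and> poly f c = 0} = \<alpha> ` {..<\<gamma>}"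
    by auto
  then have curves: "{C. zariski_closed_in (U_f f) C \<and> iso_to_A1 (U_f f) C}
      = x1_axis_at ` \<alpha> ` {..<\<gamma>} \<union> x2_axis_at ` \<alpha> ` {..<\<gamma>}"
    by (simp add: closed_iso_to_A1_in_U_f_eq_axes)
  have "x1_axis_at ` \<alpha> ` {..<\<gamma>} \<union> x2_axis_at ` \<alpha> ` {..<\<gamma>}
      = (\<Union>i<\<gamma>. {{(x1, x2, y). x2 = 0 \<and> y = \<alpha> i}, {(x1, x2, y). x1 = 0 \<and> y = \<alpha> i}})"
    by (auto simp: x1_axis_at_def x2_axis_at_def)
  moreover have "card (\<alpha> ` {..<\<gamma>}) = \<gamma>"
    using assms(1) by (simp add: card_image)
  ultimately show ?thesis
    using curves card_axes[of "\<alpha> ` {..<\<gamma>}"] by simp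
qed

end
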